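(* For every integer $d\ge 2$ and every $\theta>0$, in the stag hunt game described in the context, $F$ is strictly decreasing in $\sigma_c^2$, strictly decreasing in $\sigma_b^2$, and strictly increasing in $\sigma_{bc}$ (each time with the remaining parameters $\mu_b,\mu_c$ and the other second moments held fixed).
   Context: For integers $0\le k\le n$ and $\theta>0$ let $\psi_n^k=\frac{\prod_{i=1}^{k}(\theta+i-1)\prod_{j=1}^{n-k}(\theta+j-1)}{\prod_{l=1}^{n}(2\theta+l-1)}$ (empty products equal $1$). For real arrays $\mu_{C,k},\mu_{D,k},\sigma_{CC,kl},\sigma_{CD,kl},\sigma_{DD,kl}$ ($k,l=0,\ldots,d-1$) define $$F=\sum_{k=0}^{d-1}\binom{d-1}{k}\psi_{d+1}^{k+1}(\mu_{C,k}-\mu_{D,k})+\sum_{k,l=0}^{d-1}\binom{d-1}{k}\binom{d-1}{l}\Big[-\psi_{2d+1}^{k+l+2}(\sigma_{CC,kl}-\sigma_{CD,kl})+\psi_{2d+1}^{k+l+1}(\sigma_{DD,kl}-\sigma_{CD,kl})\Big].$$ These arrays are the scaled means and second moments of the payoffs $a_k$ (to a cooperator) and $b_k$ (to a defector) with $k$ cooperating partners in a group of size $d$. In the paper's large-population weak-selection approximation, the average abundance of $C$ is $\tfrac12+\tfrac{\delta(1-u)}{u}F$; weak selection favors the abundance of $C$ iff $F>0$, and increasing $F$ means increasing the average abundance of $C$. Stag hunt game: random benefit $b$ and cost $c$ have scaled moments $\mu_b,\mu_c,\sigma_b^2,\sigma_c^2,\sigma_{bc}$ (i.e. $E[b]=\mu_b\delta+o(\delta)$,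 $E[c]=\mu_c\delta+o(\delta)$, $E[b^2]=\sigma_b^2\delta+o(\delta)$, $E[c^2]=\sigma_c^2\delta+o(\delta)$, $E[bc]=\sigma_{bc}\delta+o(\delta)$). The payoffs are $a_k=-c$ for $k<d-1$, $a_{d-1}=b-c$, and $b_k=0$ for all $k$. Hence $\mu_{C,k}=-\mu_c$ for $k<d-1$, $\mu_{C,d-1}=\mu_b-\mu_c$, $\mu_{D,k}=0$, and $\sigma_{CD,kl}=\sigma_{DD,kl}=0$. Furthermore $\sigma_{CC,kl}=\sigma_c^2$ if $k,l<d-1$; $\sigma_{CC,kl}=\sigma_c^2-\sigma_{bc}$ if exactly one of $k,l$ equals $d-1$; and $\sigma_{CC,kl}=\sigma_c^2-2\sigma_{bc}+\sigma_b^2$ if $k=l=d-1$. *)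

theory Defs
  imports Complex_Main
begin

definition psi :: "real \<Rightarrow> nat \<Rightarrow> nat \<Rightarrow> real" where
  "psi \<theta> n k =
     (\<Prod>i=1..k. \<theta> + real i - 1) * (\<Prod>j=1..n-k. \<theta> + real j - 1)
     / (\<Prod>l=1..n. 2 * \<theta> + real l - 1)"

definition F_gen :: "nat \<Rightarrow> real \<Rightarrow> (nat \<Rightarrow> real) \<Rightarrow> (nat \<Rightarrow> real)
    \<Rightarrow> (nat \<Rightarrow> nat \<Rightarrow> real) \<Rightarrow> (nat \<Rightarrow> nat \<Rightarrow> real) \<Rightarrow> (nat \<Rightarrow> nat \<Rightarrow> real) \<Rightarrow> real" where
  "F_gen d \<theta> muC muD sCC sCD sDD =
     (\<Sum>k=0..d-1. real (d-1 choose k) * psi \<theta> (d+1) (k+1) * (muC k - muD k))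
   + (\<Sum>k=0..d-1. \<Sum>l=0..d-1. real (d-1 choose k) * real (d-1 choose l) *
        (- psi \<theta> (2*d+1) (k+l+2) * (sCC k l - sCD k l)
         + psi \<theta> (2*d+1) (k+l+1) * (sDD k l - sCD k l)))"

definition sh_muC :: "nat \<Rightarrow> real \<Rightarrow> real \<Rightarrow> nat \<Rightarrow> real" where
  "sh_muC d mu_b mu_c k = (if k = d-1 then mu_b - mu_c else - mu_c)"

definition sh_sCC :: "nat \<Rightarrow> real \<Rightarrow> real \<Rightarrow> real \<Rightarrow> nat \<Rightarrow> nat \<Rightarrow> real" where
  "sh_sCC d sb2 sc2 sbc k l =
     (if k = d-1 \<and> l = d-1 then sc2 - 2*sbc + sb2
      else if k = d-1 \<or> l = d-1 then sc2 - sbc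
      else sc2)"

definition F_stag :: "nat \<Rightarrow> real \<Rightarrow> real \<Rightarrow> real \<Rightarrow> real \<Rightarrow> real \<Rightarrow> real \<Rightarrow> real" where
  "F_stag d \<theta> mu_b mu_c sb2 sc2 sbc =
     F_gen d \<theta> (sh_muC d mu_b mu_c) (\<lambda>_. 0) (sh_sCC d sb2 sc2 sbc) (\<lambda>_ _. 0) (\<lambda>_ _. 0)"

end

theory Submission
  imports Defs
begin

text \<open>The second moments enter \<open>F\<close> only through the term
  \<open>-(\<Sum>k l. C(d-1,k) * C(d-1,l) * \<psi>(2d+1, k+l+2) * \<sigma>CC(k,l))\<close>, whose weights are
  positive for \<open>\<theta> > 0\<close>, so \<open>F\<close> is strictly antitone in the array \<open>\<sigma>CC\<close>.
  In the stag hunt, raising \<open>\<sigma>c\<^sup>2\<close> raises every entry of \<open>\<sigma>CC\<close>, raising \<open>\<sigma>b\<^sup>2\<close>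
  raises the entry at \<open>k = l = d-1\<close>, and raising \<open>\<sigma>bc\<close> lowers the entries of the
  last row and column; each change is strict at \<open>k = l = d-1\<close>.\<close>

lemma psi_pos: "\<theta> > 0 \<Longrightarrow> psi \<theta> n k > 0"
  unfolding psi_def
  by (intro divide_pos_pos mult_pos_pos prod_pos; auto; linarith)

lemma F_gen_strict_antimono_sCC:
  assumes "\<theta> > 0"
    and le: "\<And>k l. k \<le> d-1 \<Longrightarrow> l \<le> d-1 \<Longrightarrow> s k l \<le> s' k l"
    and i: "i \<le> d-1" and j: "j \<le> d-1" and lt: "s i j < s' i j"
  shows "F_gen d \<theta> muC muD s' sCD sDD < F_gen d \<theta> muC muD s sCD sDD"
proof -
  define w where "w k l = real (d-1 choose k) * real (d-1 choose l) * psi \<theta> (2*d+1) (k+l+2)"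
    for k l
  have w_pos: "w k l > 0" if "k \<le> d-1" "l \<le> d-1" for k l
    using that psi_pos[OF \<open>\<theta> > 0\<close>] by (simp add: w_def)
  then have w_nonneg: "w k l \<ge> 0" if "k \<le> d-1" "l \<le> d-1" for k l
    using that by (simp add: less_imp_le)
  have "(\<Sum>k=0..d-1. \<Sum>l=0..d-1. w k l * s k l) < (\<Sum>k=0..d-1. \<Sum>l=0..d-1. w k l * s' k l)"
  proof (rule sum_strict_mono_ex1)
    show "\<forall>k\<in>{0..d-1}. (\<Sum>l=0..d-1. w k l * s k l) \<le> (\<Sum>l=0..d-1. w k l * s' k l)"
      using le w_nonneg by (auto intro!: sum_mono mult_left_mono)
    have "(\<Sum>l=0..d-1. w i l * s i l) < (\<Sum>l=0..d-1. w i l * s' i l)"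
    proof (rule sum_strict_mono_ex1)
      show "\<forall>l\<in>{0..d-1}. w i l * s i l \<le> w i l * s' i l"
        using le w_nonneg i by (auto intro!: mult_left_mono)
      show "\<exists>l\<in>{0..d-1}. w i l * s i l < w i l * s' i l"
        using lt w_pos i j by (auto intro!: bexI[of _ j])
    qed simp
    then show "\<exists>k\<in>{0..d-1}. (\<Sum>l=0..d-1. w k l * s k l) < (\<Sum>l=0..d-1. w k l * s' k l)"
      using i by (auto intro!: bexI[of _ i])
  qed simp
  moreover have "F_gen d \<theta> muC muD s sCD sDD - F_gen d \<theta> muC muD s' sCD sDD
      = (\<Sum>k=0..d-1. \<Sum>l=0..d-1. w k l * s' k l) - (\<Sum>k=0..d-1. \<Sum>l=0..d-1. w k l * s k l)"
    unfolding F_gen_def w_def by (simp add: sum_subtractf[symmetric] algebra_simps)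
  ultimately show ?thesis
    by linarith
qed

theorem mainTheorem4:
  fixes d :: nat and \<theta> :: real
  assumes "d \<ge> 2" and "\<theta> > 0"
  shows "(\<forall>mu_b mu_c sb2 sbc x y. x < y \<longrightarrow>
            F_stag d \<theta> mu_b mu_c sb2 y sbc < F_stag d \<theta> mu_b mu_c sb2 x sbc)
       \<and> (\<forall>mu_b mu_c sc2 sbc x y. x < y \<longrightarrow>
            F_stag d \<theta> mu_b mu_c y sc2 sbc < F_stag d \<theta> mu_b mu_c x sc2 sbc)
       \<and> (\<forall>mu_b mu_c sb2 sc2 x y. x < y \<longrightarrow>
            F_stag d \<theta> mu_b mu_c sb2 sc2 x < F_stag d \<theta> mu_b mu_c sb2 sc2 y)"
  unfolding F_stag_def
  using \<open>\<theta> > 0\<close> by (auto intro!: F_gen_strict_antimono_sCC[where i="d-1" and j="d-1"] simp: sh_sCC_def)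

end
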